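(* For any global correlation value $r \in (0,1)$ and any recovery targets $\rho_1,\rho_2 \in [0,1]$ with $\rho_1<\rho_2$, there exist data-generating processes $P_1$ and $P_2$ for (prompt, candidate scores, oracle utilities) such that $\mathrm{Corr}_{P_1}(S,O)=\mathrm{Corr}_{P_2}(S,O)=r$, while $\mathrm{Recovery}(P_1)=\rho_1$ and $\mathrm{Recovery}(P_2)=\rho_2$.
   Context: A data-generating process draws prompts $x$ and, for each prompt, $n\ge 2$ candidates $i\in\{1,\dots,n\}$, each with a judge score $S_{x,i}\in\mathbb{R}$ and an oracle utility $O_{x,i}\in\mathbb{R}$. $\mathrm{Corr}(S,O)$ denotes the global (Pearson) correlation over all (prompt, candidate) pairs. Write $S_{x,i}=\mu^S_x+\varepsilon^S_{x,i}$ and $O_{x,i}=\mu^O_x+\varepsilon^O_{x,i}$, where $\mu^S_x,\mu^O_x$ are prompt-level means and $\varepsilon^S_{x,i},\varepsilon^O_{x,i}$ are within-prompt deviations. Selection strategies for a prompt: judge-greedy picks $\arg\max_i S_{x,i}$ (uniform random tie-breaking among tied maxima), random picks a uniformly random candidate, oracle picks $\arg\max_i O_{x,i}$. Recovery is $\mathrm{Recovery}=\dfrac{\mathbb{E}[O_{\text{judge}}]-\mathbb{E}[O_{\text{random}}]}{\mathbb{E}[O_{\text{oracle}}]-\mathbb{E}[O_{\text{random}}]}$, where $O_{\text{judge}},O_{\text{random}},O_{\text{oracle}}$ are the oracle utilities of the candidates selected by the respective strategies (assuming the denominator is positive). *)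

theory Defs
  imports "HOL-Probability.Probability_Mass_Function"
begin

text \<open>A data-generating process with n candidates per prompt: a discrete distribution
  over prompts, each prompt represented by its candidate judge scores S and oracle
  utilities O (only indices i < n are relevant; candidates are 0..n-1).\<close>

type_synonym dgp = "((nat \<Rightarrow> real) \<times> (nat \<Rightarrow> real)) pmf"

definition valid_dgp :: "nat \<Rightarrow> dgp \<Rightarrow> bool" where
  "valid_dgp n P \<longleftrightarrow> n \<ge> 2 \<and> finite (set_pmf P)"

definition cand_pairs :: "nat \<Rightarrow> dgp \<Rightarrow> (real \<times> real) pmf" where
  "cand_pairs n P = bind_pmf P (\<lambda>(S, U). map_pmf (\<lambda>i. (S i, U i)) (pmf_of_set {..<n}))"

definition pearson :: "(real \<times> real) pmf \<Rightarrow> real" where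
  "pearson Q = (let E = measure_pmf.expectation Q;
                    mS = E fst; mO = E snd;
                    cov = E (\<lambda>(s, u). (s - mS) * (u - mO));
                    vS = E (\<lambda>(s, u). (s - mS)\<^sup>2);
                    vO = E (\<lambda>(s, u). (u - mO)\<^sup>2)
                in cov / sqrt (vS * vO))"

definition corr_SO :: "nat \<Rightarrow> dgp \<Rightarrow> real" where
  "corr_SO n P = pearson (cand_pairs n P)"

text \<open>Judge-greedy: argmax of S with uniform random tie-breaking; conditional expected
  oracle utility given the prompt.\<close>
definition judge_argmax :: "nat \<Rightarrow> (nat \<Rightarrow> real) \<Rightarrow> nat set" where
  "judge_argmax n S = {i \<in> {..<n}. \<forall>j<n. S j \<le> S i}"

definition judge_value :: "nat \<Rightarrow> (nat \<Rightarrow> real) \<times> (nat \<Rightarrow> real) \<Rightarrow> real" where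
  "judge_value n x = (case x of (S, U) \<Rightarrow>
     (\<Sum>i\<in>judge_argmax n S. U i) / real (card (judge_argmax n S)))"

definition random_value :: "nat \<Rightarrow> (nat \<Rightarrow> real) \<times> (nat \<Rightarrow> real) \<Rightarrow> real" where
  "random_value n x = (case x of (S, U) \<Rightarrow> (\<Sum>i<n. U i) / real n)"

definition oracle_value :: "nat \<Rightarrow> (nat \<Rightarrow> real) \<times> (nat \<Rightarrow> real) \<Rightarrow> real" where
  "oracle_value n x = (case x of (S, U) \<Rightarrow> Max (U ` {..<n}))"

definition E_judge :: "nat \<Rightarrow> dgp \<Rightarrow> real" where
  "E_judge n P = measure_pmf.expectation P (judge_value n)"

definition E_random :: "nat \<Rightarrow> dgp \<Rightarrow> real" where
  "E_random n P = measure_pmf.expectation P (random_value n)"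

definition E_oracle :: "nat \<Rightarrow> dgp \<Rightarrow> real" where
  "E_oracle n P = measure_pmf.expectation P (oracle_value n)"

definition recovery :: "nat \<Rightarrow> dgp \<Rightarrow> real" where
  "recovery n P = (E_judge n P - E_random n P) / (E_oracle n P - E_random n P)"

end

theory Submission
  imports Defs
begin

text \<open>Recovery only sees how the judge ranks candidates within a prompt, while the global
  correlation also contains the between-prompt covariance. With three candidates of utilities
  \<open>1, a, 0\<close> and a judge that always picks the middle one, the recovery is \<open>(2a - 1)/(2 - a)\<close>,
  which sweeps \<open>[0, 1]\<close> as \<open>a\<close> runs through \<open>[1/2, 1]\<close>. A prompt-level shift common to \<open>S\<close> and
  \<open>O\<close> pushes the correlation towards \<open>1\<close>, and prompt-level noise in \<open>S\<close> alone pulls it back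
  down to any prescribed \<open>r\<close>; neither changes a ranking within a prompt.\<close>

lemma expectation_cand_pairs:
  assumes "finite (set_pmf P)" and "n > 0"
  shows "measure_pmf.expectation (cand_pairs n P) f =
         measure_pmf.expectation P (\<lambda>(S, U). (\<Sum>i<n. f (S i, U i)) / real n)"
proof -
  have cand_expectation: "measure_pmf.expectation (pmf_of_set {..<n}) (\<lambda>i. f (S i, U i)) =
      (\<Sum>i<n. f (S i, U i)) / real n"
    for S U :: "nat \<Rightarrow> real"
    using assms(2) by (subst integral_pmf_of_set) auto
  have cands_support: "set_pmf (pmf_of_set {..<n}) = {..<n}"
    using assms(2) by (subst set_pmf_of_set) auto
  have "measure_pmf.expectation (cand_pairs n P) f =
      (\<Sum>x\<in>set_pmf P. pmf P x *\<^sub>R (case x of (S, U) \<Rightarrow> (\<Sum>i<n. f (S i, U i)) / real n))"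
    unfolding cand_pairs_def using assms
    by (subst pmf_expectation_bind[of "set_pmf P"])
       (auto simp: case_prod_beta cand_expectation cands_support)
  also have "\<dots> = measure_pmf.expectation P (\<lambda>(S, U). (\<Sum>i<n. f (S i, U i)) / real n)"
    using assms(1) by (subst integral_measure_pmf[of "set_pmf P"]) auto
  finally show ?thesis .
qed

lemma pearson_with_noise_attains:
  fixes K B V r :: real
  assumes "0 < r" and "0 < K" and "0 < V" and "r\<^sup>2 * B * V \<le> K\<^sup>2"
  shows "\<exists>c. K / sqrt ((B + c\<^sup>2) * V) = r"
proof
  define c where "c = sqrt (K\<^sup>2 / (r\<^sup>2 * V) - B)"
  have "c\<^sup>2 = K\<^sup>2 / (r\<^sup>2 * V) - B"
    unfolding c_def using assms by (subst real_sqrt_pow2) (auto simp: field_simps)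
  then have "(B + c\<^sup>2) * V = (K / r)\<^sup>2"
    using assms by (simp add: field_simps power2_eq_square)
  then show "K / sqrt ((B + c\<^sup>2) * V) = r"
    using assms by simp
qed

lemma recovery_parametrization:
  fixes \<rho> :: real
  assumes "0 \<le> \<rho>" and "\<rho> \<le> 1"
  shows "\<exists>a. 1/2 \<le> a \<and> a \<le> 1 \<and> (2*a - 1) / (2 - a) = \<rho>"
proof (intro exI conjI)
  let ?a = "(1 + 2*\<rho>) / (2 + \<rho>)"
  show "1/2 \<le> ?a" and "?a \<le> 1"
    using assms by (simp_all add: field_simps)
  have "2 * ?a - 1 = 3*\<rho> / (2 + \<rho>)" and "2 - ?a = 3 / (2 + \<rho>)"
    using assms by (simp_all add: field_simps)
  then show "(2 * ?a - 1) / (2 - ?a) = \<rho>"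
    using assms by simp
qed

definition base_score :: "nat \<Rightarrow> real" where
  "base_score i = (if i = 1 then 1 else 0)"

definition base_utility :: "real \<Rightarrow> nat \<Rightarrow> real" where
  "base_utility a i = (if i = 0 then 1 else if i = 1 then a else 0)"

text \<open>Orthogonal mean-zero contrasts over the four prompts, so that the shift and the noise
  enter the second moments without cross terms.\<close>

definition prompt_shift :: "nat \<Rightarrow> real" where
  "prompt_shift j = (if j < 2 then 1 else -1)"

definition judge_noise :: "nat \<Rightarrow> real" where
  "judge_noise j = (if j = 0 \<or> j = 2 then 1 else -1)"

definition shifted_prompt :: "real \<Rightarrow> real \<Rightarrow> real \<Rightarrow> nat \<Rightarrow> (nat \<Rightarrow> real) \<times> (nat \<Rightarrow> real)"
  where "shifted_prompt a M c j =
    ((\<lambda>i. base_score i + M * prompt_shift j + c * judge_noise j),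
     (\<lambda>i. base_utility a i + M * prompt_shift j))"

definition shifted_dgp :: "real \<Rightarrow> real \<Rightarrow> real \<Rightarrow> dgp" where
  "shifted_dgp a M c = map_pmf (shifted_prompt a M c) (pmf_of_set {..<4})"

lemma lessThan_3: "{..<3::nat} = {0, 1, 2}" and lessThan_4: "{..<4::nat} = {0, 1, 2, 3}"
  by auto

lemma set_pmf_shifted_dgp: "set_pmf (shifted_dgp a M c) = shifted_prompt a M c ` {..<4}"
  unfolding shifted_dgp_def by (simp, subst set_pmf_of_set) (auto simp: lessThan_4)

lemma expectation_shifted_dgp:
  fixes f :: "(nat \<Rightarrow> real) \<times> (nat \<Rightarrow> real) \<Rightarrow> real"
  shows "measure_pmf.expectation (shifted_dgp a M c) f = (\<Sum>j<4. f (shifted_prompt a M c j)) / 4"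
  unfolding shifted_dgp_def by (simp, subst integral_pmf_of_set) (auto simp: lessThan_4)

lemma judge_argmax_shifted_prompt: "judge_argmax 3 (fst (shifted_prompt a M c j)) = {1}"
  unfolding judge_argmax_def shifted_prompt_def lessThan_3 by (auto simp: base_score_def)

lemma E_judge_shifted_dgp: "E_judge 3 (shifted_dgp a M c) = a"
proof -
  have "judge_value 3 (shifted_prompt a M c j) = a + M * prompt_shift j" for j
    unfolding judge_value_def
    by (simp add: case_prod_beta judge_argmax_shifted_prompt)
       (simp add: shifted_prompt_def base_utility_def)
  then show ?thesis
    unfolding E_judge_def expectation_shifted_dgp by (simp add: lessThan_4 prompt_shift_def)
qed

lemma E_random_shifted_dgp: "E_random 3 (shifted_dgp a M c) = (1 + a) / 3"
proof -
  have "random_value 3 (shifted_prompt a M c j) = (1 + a) / 3 + M * prompt_shift j" for j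
    unfolding random_value_def shifted_prompt_def
    by (simp add: lessThan_3 base_utility_def field_simps)
  then show ?thesis
    unfolding E_random_def expectation_shifted_dgp by (simp add: lessThan_4 prompt_shift_def)
qed

lemma E_oracle_shifted_dgp:
  assumes "0 \<le> a" and "a \<le> 1"
  shows "E_oracle 3 (shifted_dgp a M c) = 1"
proof -
  have "oracle_value 3 (shifted_prompt a M c j) = 1 + M * prompt_shift j" for j
    unfolding oracle_value_def shifted_prompt_def
    using assms by (simp add: lessThan_3 base_utility_def max_def)
  then show ?thesis
    unfolding E_oracle_def expectation_shifted_dgp by (simp add: lessThan_4 prompt_shift_def)
qed

lemma recovery_shifted_dgp:
  assumes "0 \<le> a" and "a \<le> 1"
  shows "recovery 3 (shifted_dgp a M c) = (2*a - 1) / (2 - a)"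
proof -
  have "recovery 3 (shifted_dgp a M c) = (a - (1 + a)/3) / (1 - (1 + a)/3)"
    unfolding recovery_def E_judge_shifted_dgp E_random_shifted_dgp
      E_oracle_shifted_dgp[OF assms] ..
  also have "\<dots> = (2*a - 1) / (2 - a)"
    using assms by (simp add: field_simps)
  finally show ?thesis .
qed

lemma corr_SO_shifted_dgp:
  "corr_SO 3 (shifted_dgp a M c) =
     ((2*a - 1)/9 + M\<^sup>2) / sqrt ((2/9 + M\<^sup>2 + c\<^sup>2) * ((2*a\<^sup>2 - 2*a + 2)/9 + M\<^sup>2))"
proof -
  let ?E = "measure_pmf.expectation (cand_pairs 3 (shifted_dgp a M c))"
  have E: "?E f = (\<Sum>j\<in>{0,1,2,3}. \<Sum>i\<in>{0,1,2}.
                     f (fst (shifted_prompt a M c j) i, snd (shifted_prompt a M c j) i)) / 12"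
    for f :: "real \<times> real \<Rightarrow> real"
    by (simp add: expectation_cand_pairs set_pmf_shifted_dgp expectation_shifted_dgp
        case_prod_beta lessThan_3 lessThan_4 sum_divide_distrib[symmetric])
  note defs = shifted_prompt_def base_score_def base_utility_def prompt_shift_def judge_noise_def
  have mean_S: "?E fst = 1/3" and mean_O: "?E snd = (1 + a)/3"
    unfolding E by (simp_all add: defs)
  have cov: "?E (\<lambda>(s, u). (s - 1/3) * (u - (1 + a)/3)) = (2*a - 1)/9 + M\<^sup>2"
    and var_S: "?E (\<lambda>(s, u). (s - 1/3)\<^sup>2) = 2/9 + M\<^sup>2 + c\<^sup>2"
    and var_O: "?E (\<lambda>(s, u). (u - (1 + a)/3)\<^sup>2) = (2*a\<^sup>2 - 2*a + 2)/9 + M\<^sup>2"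
    unfolding E by (simp_all add: defs) (simp_all add: field_simps power2_eq_square)
  show ?thesis
    unfolding corr_SO_def pearson_def Let_def mean_S mean_O cov var_S var_O ..
qed

lemma corr_SO_shifted_dgp_attains:
  assumes "1/2 \<le> a" and "a \<le> 1" and "0 < r" and "r < 1"
  shows "\<exists>M c. corr_SO 3 (shifted_dgp a M c) = r"
proof -
  define M where "M = sqrt (r / (1 - r))"
    \<comment> \<open>large enough that without noise the correlation is at least \<open>r\<close>\<close>
  define K where "K = (2*a - 1)/9 + M\<^sup>2"
  define V where "V = (2*a\<^sup>2 - 2*a + 2)/9 + M\<^sup>2"
  have shift_balance: "r * (M\<^sup>2 + 1) = M\<^sup>2"
    unfolding M_def using assms by (simp add: field_simps)
  have "0 < M\<^sup>2"
    unfolding M_def using assms by simp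
  have "M\<^sup>2 \<le> K"
    unfolding K_def using assms by simp
  have "(1/2)\<^sup>2 \<le> a\<^sup>2" and "a\<^sup>2 \<le> 1\<^sup>2"
    using assms by (intro power_mono; simp)+
  then have "0 < 2*a\<^sup>2 - 2*a + 2" and "2*a\<^sup>2 - 2*a + 2 \<le> 9"
    using assms by (simp_all add: power2_eq_square)
  then have "0 < V" and "V \<le> M\<^sup>2 + 1"
    unfolding V_def using \<open>0 < M\<^sup>2\<close> by (auto intro!: add_pos_pos)
  have "r\<^sup>2 * (2/9 + M\<^sup>2) * V \<le> r\<^sup>2 * ((M\<^sup>2 + 1) * (M\<^sup>2 + 1))"
    unfolding mult.assoc using \<open>0 < V\<close> \<open>V \<le> M\<^sup>2 + 1\<close>
    by (intro mult_left_mono mult_mono) auto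
  also have "\<dots> = (M\<^sup>2)\<^sup>2"
    using shift_balance by (metis power2_eq_square power_mult_distrib)
  also have "\<dots> \<le> K\<^sup>2"
    using \<open>0 < M\<^sup>2\<close> \<open>M\<^sup>2 \<le> K\<close> by (intro power_mono) auto
  finally obtain c where "K / sqrt ((2/9 + M\<^sup>2 + c\<^sup>2) * V) = r"
    using pearson_with_noise_attains[of r K V] assms \<open>0 < M\<^sup>2\<close> \<open>M\<^sup>2 \<le> K\<close> \<open>0 < V\<close>
    by fastforce
  then show ?thesis
    unfolding corr_SO_shifted_dgp K_def V_def by blast
qed

lemma exists_dgp_with_corr_and_recovery:
  assumes "0 < r" and "r < 1" and "0 \<le> \<rho>" and "\<rho> \<le> 1"
  shows "\<exists>n P. valid_dgp n P \<and> corr_SO n P = r \<and>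
                E_oracle n P - E_random n P > 0 \<and> recovery n P = \<rho>"
proof -
  obtain a where "1/2 \<le> a" "a \<le> 1" and recovery_a: "(2*a - 1) / (2 - a) = \<rho>"
    using recovery_parametrization assms by blast
  then obtain M c where corr: "corr_SO 3 (shifted_dgp a M c) = r"
    using corr_SO_shifted_dgp_attains assms by blast
  have "valid_dgp 3 (shifted_dgp a M c)"
    by (simp add: valid_dgp_def set_pmf_shifted_dgp)
  moreover have "E_oracle 3 (shifted_dgp a M c) - E_random 3 (shifted_dgp a M c) > 0"
    using \<open>1/2 \<le> a\<close> \<open>a \<le> 1\<close> by (simp add: E_oracle_shifted_dgp E_random_shifted_dgp)
  moreover have "recovery 3 (shifted_dgp a M c) = \<rho>"
    using \<open>1/2 \<le> a\<close> \<open>a \<le> 1\<close> recovery_a by (simp add: recovery_shifted_dgp)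
  ultimately show ?thesis
    using corr by blast
qed

theorem mainTheorem1:
  fixes r \<rho>1 \<rho>2 :: real
  assumes "0 < r" and "r < 1"
    and "0 \<le> \<rho>1" and "\<rho>1 < \<rho>2" and "\<rho>2 \<le> 1"
  shows "\<exists>n1 P1 n2 P2.
           valid_dgp n1 P1 \<and> valid_dgp n2 P2 \<and>
           corr_SO n1 P1 = r \<and> corr_SO n2 P2 = r \<and>
           E_oracle n1 P1 - E_random n1 P1 > 0 \<and>
           E_oracle n2 P2 - E_random n2 P2 > 0 \<and>
           recovery n1 P1 = \<rho>1 \<and> recovery n2 P2 = \<rho>2"
proof -
  obtain n1 P1 where "valid_dgp n1 P1" "corr_SO n1 P1 = r"
      "E_oracle n1 P1 - E_random n1 P1 > 0" "recovery n1 P1 = \<rho>1"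
    using exists_dgp_with_corr_and_recovery[of r \<rho>1] assms by auto
  moreover obtain n2 P2 where "valid_dgp n2 P2" "corr_SO n2 P2 = r"
      "E_oracle n2 P2 - E_random n2 P2 > 0" "recovery n2 P2 = \<rho>2"
    using exists_dgp_with_corr_and_recovery[of r \<rho>2] assms by auto
  ultimately show ?thesis
    by blast
qed

end
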